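(* The functor $G:\mathbf{cMet}_1\to{\rm PER}(\mathbf U)$, $G(X,d)=(X,d)$, $G(f)=[(x,y)\mapsto d(f(x),y)]$, preserves finite products.
   Context: $\mathbf{cMet}_1$: complete metric spaces with all distances $\le 1$ and uniformly continuous maps; its binary product is the set-theoretic product with the max-metric, its terminal object a one-point space. For functions $\alpha,\beta:Z\to[0,1]$ write $\alpha\sqsubseteq\beta$ if for every $\varepsilon>0$ there exists $\delta>0$ such that for all $z$, $\alpha(z)\le\delta$ implies $\beta(z)\le\varepsilon$. The category ${\rm PER}(\mathbf U)$, concretely: objects are pairs $(X,R)$ with $X$ a set and $R:X\times X\to[0,1]$ such that $R(x,y)\sqsubseteq R(y,x)$ (as functions of $(x,y)$) and $\max(R(x,y),R(y,z))\sqsubseteq R(x,z)$ (as functions of $(x,y,z)$). A functional relation $(X,R)\to(Y,S)$ is $F:X\times Y\to[0,1]$ with $F(x,y)\sqsubseteq\max(R(x,x),S(y,y))$, $\max(F(x,y),R(x,x'),S(y,y'))\sqsubseteq F(x',y')$, $\max(F(x,y),F(x,y'))\sqsubseteq S(y,y')$, and $R(x,x)\sqsubseteq\inf_{y\in Y}F(x,y)$ (each as functions of the displayed variables). Morphisms are classes $[F]$ with $F\sim F'$ iff $F\sqsubseteq F'$; composition of $[F]$ and $[H]$ is $[(x,z)\mapsto\inf_y\max(F(x,y),H(y,z))]$. *)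

theory Defs
  imports "HOL-Analysis.Analysis"
begin

definition cMet1 :: "'a set \<Rightarrow> ('a \<Rightarrow> 'a \<Rightarrow> real) \<Rightarrow> bool" where
  "cMet1 X d \<longleftrightarrow> Metric_space X d \<and> Metric_space.mcomplete X d \<and>
     (\<forall>x\<in>X. \<forall>y\<in>X. d x y \<le> 1)"

text \<open>Binary product in cMet_1: cartesian product with the max-metric.\<close>
definition maxdist :: "('a \<Rightarrow> 'a \<Rightarrow> real) \<Rightarrow> ('b \<Rightarrow> 'b \<Rightarrow> real) \<Rightarrow> ('a \<times> 'b) \<Rightarrow> ('a \<times> 'b) \<Rightarrow> real" where
  "maxdist d1 d2 p q = max (d1 (fst p) (fst q)) (d2 (snd p) (snd q))"

definition sqle :: "'z set \<Rightarrow> ('z \<Rightarrow> real) \<Rightarrow> ('z \<Rightarrow> real) \<Rightarrow> bool" where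
  "sqle Zs \<alpha> \<beta> \<longleftrightarrow> (\<forall>\<epsilon>>0. \<exists>\<delta>>0. \<forall>z\<in>Zs. \<alpha> z \<le> \<delta> \<longrightarrow> \<beta> z \<le> \<epsilon>)"

text \<open>Infimum over a set, values in [0,1]; the empty infimum is the top element 1.\<close>
definition inf01 :: "'y set \<Rightarrow> ('y \<Rightarrow> real) \<Rightarrow> real" where
  "inf01 Y f = (if Y = {} then 1 else (INF y\<in>Y. f y))"

definition per_obj :: "'a set \<Rightarrow> ('a \<Rightarrow> 'a \<Rightarrow> real) \<Rightarrow> bool" where
  "per_obj X R \<longleftrightarrow>
     (\<forall>x\<in>X. \<forall>y\<in>X. 0 \<le> R x y \<and> R x y \<le> 1) \<and>
     sqle (X \<times> X) (\<lambda>(x,y). R x y) (\<lambda>(x,y). R y x) \<and>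
     sqle (X \<times> X \<times> X) (\<lambda>(x,y,z). max (R x y) (R y z)) (\<lambda>(x,y,z). R x z)"

definition funrel :: "'a set \<Rightarrow> ('a \<Rightarrow> 'a \<Rightarrow> real) \<Rightarrow> 'b set \<Rightarrow> ('b \<Rightarrow> 'b \<Rightarrow> real)
    \<Rightarrow> ('a \<Rightarrow> 'b \<Rightarrow> real) \<Rightarrow> bool" where
  "funrel X R Y S F \<longleftrightarrow>
     (\<forall>x\<in>X. \<forall>y\<in>Y. 0 \<le> F x y \<and> F x y \<le> 1) \<and>
     sqle (X \<times> Y) (\<lambda>(x,y). F x y) (\<lambda>(x,y). max (R x x) (S y y)) \<and>
     sqle (X \<times> Y \<times> X \<times> Y) (\<lambda>(x,y,x',y'). max (F x y) (max (R x x') (S y y')))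
                             (\<lambda>(x,y,x',y'). F x' y') \<and>
     sqle (X \<times> Y \<times> Y) (\<lambda>(x,y,y'). max (F x y) (F x y')) (\<lambda>(x,y,y'). S y y') \<and>
     sqle X (\<lambda>x. R x x) (\<lambda>x. inf01 Y (\<lambda>y. F x y))"

text \<open>Equality of morphisms: [F] = [F'] iff F below-eq F'.\<close>
definition mor_eq :: "'a set \<Rightarrow> 'b set \<Rightarrow> ('a \<Rightarrow> 'b \<Rightarrow> real) \<Rightarrow> ('a \<Rightarrow> 'b \<Rightarrow> real) \<Rightarrow> bool" where
  "mor_eq X Y F F' \<longleftrightarrow> sqle (X \<times> Y) (\<lambda>(x,y). F x y) (\<lambda>(x,y). F' x y)"

text \<open>Composition: first F : X -> Y, then H : Y -> Z.\<close>
definition rcomp :: "'b set \<Rightarrow> ('a \<Rightarrow> 'b \<Rightarrow> real) \<Rightarrow> ('b \<Rightarrow> 'c \<Rightarrow> real) \<Rightarrow> 'a \<Rightarrow> 'c \<Rightarrow> real" where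
  "rcomp Y F H x z = inf01 Y (\<lambda>y. max (F x y) (H y z))"

definition Gmor :: "('b \<Rightarrow> 'b \<Rightarrow> real) \<Rightarrow> ('a \<Rightarrow> 'b) \<Rightarrow> 'a \<Rightarrow> 'b \<Rightarrow> real" where
  "Gmor dY f x y = dY (f x) y"

definition prod_univ_at :: "'z set \<Rightarrow> ('z \<Rightarrow> 'z \<Rightarrow> real) \<Rightarrow>
    'p set \<Rightarrow> ('p \<Rightarrow> 'p \<Rightarrow> real) \<Rightarrow> 'a set \<Rightarrow> ('a \<Rightarrow> 'a \<Rightarrow> real) \<Rightarrow>
    'b set \<Rightarrow> ('b \<Rightarrow> 'b \<Rightarrow> real) \<Rightarrow> ('p \<Rightarrow> 'a \<Rightarrow> real) \<Rightarrow> ('p \<Rightarrow> 'b \<Rightarrow> real) \<Rightarrow> bool" where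
  "prod_univ_at Z T P Rp A RA B RB P1 P2 \<longleftrightarrow>
     (per_obj Z T \<longrightarrow>
       (\<forall>F H. funrel Z T A RA F \<and> funrel Z T B RB H \<longrightarrow>
          (\<exists>K. funrel Z T P Rp K \<and> mor_eq Z A (rcomp P K P1) F \<and> mor_eq Z B (rcomp P K P2) H \<and>
             (\<forall>K'. funrel Z T P Rp K' \<and> mor_eq Z A (rcomp P K' P1) F \<and> mor_eq Z B (rcomp P K' P2) H
                   \<longrightarrow> mor_eq Z P K' K))))"

definition term_univ_at :: "'z set \<Rightarrow> ('z \<Rightarrow> 'z \<Rightarrow> real) \<Rightarrow> 'e set \<Rightarrow> ('e \<Rightarrow> 'e \<Rightarrow> real) \<Rightarrow> bool" where
  "term_univ_at Z T E RE \<longleftrightarrow>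
     (per_obj Z T \<longrightarrow>
       (\<exists>K. funrel Z T E RE K \<and> (\<forall>K'. funrel Z T E RE K' \<longrightarrow> mor_eq Z E K' K)))"

end

theory Submission
  imports Defs
begin

(* Every axiom of PER(U) involved here has the form alpha \<sqsubseteq> beta, and all of them follow
   from a small calculus for \<sqsubseteq>: pointwise linear bounds, reindexing along maps of the
   domain, max, sums and transitivity. Metric spaces bounded by 1 are PER objects, and
   uniformly continuous maps f give the functional relations d(f x, y).
   A pair of functional relations F : Z -> X, H : Z -> Y is mediated by
   K z (x, y) = max (F z x) (H z y). Composing K with the first projection gives back F
   because F is extensional in its second argument; conversely every mediator K' satisfies
   K' \<sqsubseteq> F (z, fst p) and K' \<sqsubseteq> H (z, snd p), since the projections have zero
   self-distance, hence K' \<sqsubseteq> K. The one-point space is terminal with mediator T z z,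
   which bounds every functional relation into it. *)

lemma sqle_of_le_mult:
  assumes "0 \<le> c" and "\<And>z. z \<in> Zs \<Longrightarrow> \<beta> z \<le> c * \<alpha> z"
  shows "sqle Zs \<alpha> \<beta>"
  unfolding sqle_def
proof (intro allI impI)
  fix \<epsilon> :: real assume "0 < \<epsilon>"
  show "\<exists>\<delta>>0. \<forall>z\<in>Zs. \<alpha> z \<le> \<delta> \<longrightarrow> \<beta> z \<le> \<epsilon>"
  proof (intro exI conjI ballI impI)
    show "0 < \<epsilon> / (c + 1)" using \<open>0 < \<epsilon>\<close> \<open>0 \<le> c\<close> by simp
    fix z assume "z \<in> Zs" and "\<alpha> z \<le> \<epsilon> / (c + 1)"
    then have "\<beta> z \<le> c * (\<epsilon> / (c + 1))"
      using assms by (meson mult_left_mono order_trans)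
    also have "\<dots> \<le> \<epsilon>"
      using \<open>0 < \<epsilon>\<close> \<open>0 \<le> c\<close> by (simp add: field_simps)
    finally show "\<beta> z \<le> \<epsilon>" .
  qed
qed

lemma sqle_pullback:
  assumes "sqle Zs \<alpha> \<beta>"
    and "\<And>w. w \<in> W \<Longrightarrow> g w \<in> Zs \<and> \<alpha> (g w) \<le> \<alpha>' w \<and> \<beta>' w \<le> \<beta> (g w)"
  shows "sqle W \<alpha>' \<beta>'"
  unfolding sqle_def
proof (intro allI impI)
  fix \<epsilon> :: real assume "0 < \<epsilon>"
  then obtain \<delta> where "\<delta> > 0" "\<forall>z\<in>Zs. \<alpha> z \<le> \<delta> \<longrightarrow> \<beta> z \<le> \<epsilon>"
    using assms(1) unfolding sqle_def by blast
  then show "\<exists>\<delta>>0. \<forall>w\<in>W. \<alpha>' w \<le> \<delta> \<longrightarrow> \<beta>' w \<le> \<epsilon>"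
    using assms(2) by (blast intro: order_trans)
qed

lemma sqle_mono:
  assumes "sqle Zs \<alpha> \<beta>" and "\<And>z. z \<in> Zs \<Longrightarrow> \<alpha> z \<le> \<alpha>' z \<and> \<beta>' z \<le> \<beta> z"
  shows "sqle Zs \<alpha>' \<beta>'"
  using assms(2) by (intro sqle_pullback[OF assms(1), where g = "\<lambda>z. z"]) simp

lemma sqle_trans:
  assumes "sqle Zs \<alpha> \<beta>" and "sqle Zs \<beta> \<gamma>"
  shows "sqle Zs \<alpha> \<gamma>"
  unfolding sqle_def
proof (intro allI impI)
  fix \<epsilon> :: real assume "0 < \<epsilon>"
  then obtain \<eta> where "\<eta> > 0" "\<forall>z\<in>Zs. \<beta> z \<le> \<eta> \<longrightarrow> \<gamma> z \<le> \<epsilon>"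
    using assms(2) unfolding sqle_def by blast
  moreover obtain \<delta> where "\<delta> > 0" "\<forall>z\<in>Zs. \<alpha> z \<le> \<delta> \<longrightarrow> \<beta> z \<le> \<eta>"
    using assms(1) \<open>\<eta> > 0\<close> unfolding sqle_def by blast
  ultimately show "\<exists>\<delta>>0. \<forall>z\<in>Zs. \<alpha> z \<le> \<delta> \<longrightarrow> \<gamma> z \<le> \<epsilon>"
    by blast
qed

lemma sqle_max:
  assumes "sqle Zs \<alpha> \<beta>" and "sqle Zs \<alpha> \<gamma>"
  shows "sqle Zs \<alpha> (\<lambda>z. max (\<beta> z) (\<gamma> z))"
  unfolding sqle_def
proof (intro allI impI)
  fix \<epsilon> :: real assume "0 < \<epsilon>"
  then obtain \<delta>1 \<delta>2 where "\<delta>1 > 0" "\<forall>z\<in>Zs. \<alpha> z \<le> \<delta>1 \<longrightarrow> \<beta> z \<le> \<epsilon>"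
    and "\<delta>2 > 0" "\<forall>z\<in>Zs. \<alpha> z \<le> \<delta>2 \<longrightarrow> \<gamma> z \<le> \<epsilon>"
    using assms unfolding sqle_def by blast
  then show "\<exists>\<delta>>0. \<forall>z\<in>Zs. \<alpha> z \<le> \<delta> \<longrightarrow> max (\<beta> z) (\<gamma> z) \<le> \<epsilon>"
    by (intro exI[of _ "min \<delta>1 \<delta>2"]) auto
qed

lemma sqle_add:
  assumes "sqle Zs \<alpha> \<beta>" and "sqle Zs \<alpha> \<gamma>"
  shows "sqle Zs \<alpha> (\<lambda>z. \<beta> z + \<gamma> z)"
  unfolding sqle_def
proof (intro allI impI)
  fix \<epsilon> :: real assume "0 < \<epsilon>"
  then have "0 < \<epsilon> / 2" by simp
  then obtain \<delta>1 \<delta>2 where \<delta>1: "\<delta>1 > 0" "\<forall>z\<in>Zs. \<alpha> z \<le> \<delta>1 \<longrightarrow> \<beta> z \<le> \<epsilon> / 2"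
    and \<delta>2: "\<delta>2 > 0" "\<forall>z\<in>Zs. \<alpha> z \<le> \<delta>2 \<longrightarrow> \<gamma> z \<le> \<epsilon> / 2"
    using assms unfolding sqle_def by blast
  show "\<exists>\<delta>>0. \<forall>z\<in>Zs. \<alpha> z \<le> \<delta> \<longrightarrow> \<beta> z + \<gamma> z \<le> \<epsilon>"
  proof (intro exI[of _ "min \<delta>1 \<delta>2"] conjI ballI impI)
    fix z assume "z \<in> Zs" "\<alpha> z \<le> min \<delta>1 \<delta>2"
    then have "\<beta> z \<le> \<epsilon> / 2" "\<gamma> z \<le> \<epsilon> / 2"
      using \<delta>1(2) \<delta>2(2) by auto
    then show "\<beta> z + \<gamma> z \<le> \<epsilon>" by linarith
  qed (use \<delta>1 \<delta>2 in simp)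
qed

lemma inf01_le:
  assumes "x \<in> Y" and "\<And>y. y \<in> Y \<Longrightarrow> 0 \<le> f y"
  shows "inf01 Y f \<le> f x"
  using assms cINF_lower[OF bdd_belowI2[of Y 0 f] assms(1)] unfolding inf01_def by auto

lemma inf01_lessD:
  assumes "inf01 Y f < a" and "a \<le> 1" and "\<And>y. y \<in> Y \<Longrightarrow> 0 \<le> f y"
  shows "\<exists>y\<in>Y. f y < a"
proof -
  have "Y \<noteq> {}" using assms(1,2) by (auto simp: inf01_def)
  with assms show ?thesis
    by (simp add: inf01_def cINF_less_iff[OF \<open>Y \<noteq> {}\<close> bdd_belowI2[of Y 0 f]])
qed

lemma inf01_Times_max_le:
  assumes "\<And>x. x \<in> X \<Longrightarrow> 0 \<le> f x" and "\<And>y. y \<in> Y \<Longrightarrow> 0 \<le> g y"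
  shows "inf01 (X \<times> Y) (\<lambda>p. max (f (fst p)) (g (snd p))) \<le> max (inf01 X f) (inf01 Y g)"
proof (cases "X = {} \<or> Y = {}")
  case True
  then have "1 \<le> max (inf01 X f) (inf01 Y g)"
    by (auto simp: inf01_def le_max_iff_disj)
  with True show ?thesis
    by (simp add: inf01_def)
next
  case False
  then have "X \<noteq> {}" "Y \<noteq> {}" by simp_all
  have nonneg: "0 \<le> max (f (fst p)) (g (snd p))" if "p \<in> X \<times> Y" for p
    using that assms(1)[of "fst p"] by (simp add: mem_Times_iff le_max_iff_disj)
  show ?thesis
  proof (rule field_le_epsilon)
    fix \<eta> :: real assume "0 < \<eta>"
    have "Inf (f ` X) < Inf (f ` X) + \<eta>"
      using \<open>0 < \<eta>\<close> by simp
    then have "\<exists>x\<in>X. f x < inf01 X f + \<eta>"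
      using \<open>X \<noteq> {}\<close> unfolding inf01_def
      by (simp only: cINF_less_iff[OF \<open>X \<noteq> {}\<close> bdd_belowI2[of X 0 f, OF assms(1)]] if_False)
    then obtain x where "x \<in> X" "f x < inf01 X f + \<eta>" ..
    have "Inf (g ` Y) < Inf (g ` Y) + \<eta>"
      using \<open>0 < \<eta>\<close> by simp
    then have "\<exists>y\<in>Y. g y < inf01 Y g + \<eta>"
      using \<open>Y \<noteq> {}\<close> unfolding inf01_def
      by (simp only: cINF_less_iff[OF \<open>Y \<noteq> {}\<close> bdd_belowI2[of Y 0 g, OF assms(2)]] if_False)
    then obtain y where "y \<in> Y" "g y < inf01 Y g + \<eta>" ..
    have "inf01 (X \<times> Y) (\<lambda>p. max (f (fst p)) (g (snd p))) \<le> max (f x) (g y)"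
      using inf01_le[of "(x, y)" "X \<times> Y" "\<lambda>p. max (f (fst p)) (g (snd p))"] nonneg \<open>x \<in> X\<close> \<open>y \<in> Y\<close>
      by simp
    also have "\<dots> \<le> max (inf01 X f) (inf01 Y g) + \<eta>"
      using \<open>f x < inf01 X f + \<eta>\<close> \<open>g y < inf01 Y g + \<eta>\<close> by (simp add: max_def)
    finally show "inf01 (X \<times> Y) (\<lambda>p. max (f (fst p)) (g (snd p))) \<le> max (inf01 X f) (inf01 Y g) + \<eta>" .
  qed
qed

lemma Metric_space_maxdist:
  assumes "Metric_space X d1" and "Metric_space Y d2"
  shows "Metric_space (X \<times> Y) (maxdist d1 d2)"
proof -
  interpret X: Metric_space X d1 by fact
  interpret Y: Metric_space Y d2 by fact
  show ?thesis
  proof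
    fix p q r assume "p \<in> X \<times> Y" "q \<in> X \<times> Y" "r \<in> X \<times> Y"
    then show "maxdist d1 d2 p r \<le> maxdist d1 d2 p q + maxdist d1 d2 q r"
      using X.triangle[of "fst p" "fst q" "fst r"] Y.triangle[of "snd p" "snd q" "snd r"]
      by (auto simp: maxdist_def)
  next
    fix p q assume "p \<in> X \<times> Y" "q \<in> X \<times> Y"
    have "maxdist d1 d2 p q = 0 \<longleftrightarrow> d1 (fst p) (fst q) = 0 \<and> d2 (snd p) (snd q) = 0"
      using X.nonneg[of "fst p" "fst q"] Y.nonneg[of "snd p" "snd q"]
      unfolding maxdist_def by linarith
    with \<open>p \<in> X \<times> Y\<close> \<open>q \<in> X \<times> Y\<close> show "maxdist d1 d2 p q = 0 \<longleftrightarrow> p = q"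
      by (auto simp: prod_eq_iff)
  qed (auto simp: maxdist_def X.commute Y.commute le_max_iff_disj)
qed

lemma per_obj_Metric_space:
  assumes "Metric_space X d" and "\<And>x y. x \<in> X \<Longrightarrow> y \<in> X \<Longrightarrow> d x y \<le> 1"
  shows "per_obj X d"
proof -
  interpret Metric_space X d by fact
  have "sqle (X \<times> X) (\<lambda>(x, y). d x y) (\<lambda>(x, y). d y x)"
    by (rule sqle_of_le_mult[of 1]) (auto simp: commute)
  moreover have "sqle (X \<times> X \<times> X) (\<lambda>(x, y, z). max (d x y) (d y z)) (\<lambda>(x, y, z). d x z)"
    by (rule sqle_of_le_mult[of 2]) (simp, clarsimp, smt (verit) triangle)
  ultimately show ?thesis
    using assms(2) by (simp add: per_obj_def)
qed

lemma funrel_Gmor: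
  assumes "Metric_space X dX" and "Metric_space Y dY"
    and le_1: "\<And>y y'. y \<in> Y \<Longrightarrow> y' \<in> Y \<Longrightarrow> dY y y' \<le> 1"
    and f: "f \<in> X \<rightarrow> Y"
    and unif_cont: "sqle (X \<times> X) (\<lambda>(x, x'). dX x x') (\<lambda>(x, x'). dY (f x) (f x'))"
  shows "funrel X dX Y dY (Gmor dY f)"
proof -
  interpret X: Metric_space X dX by fact
  interpret Y: Metric_space Y dY by fact
  have "sqle (X \<times> Y) (\<lambda>(x, y). dY (f x) y) (\<lambda>(x, y). max (dX x x) (dY y y))"
    by (rule sqle_of_le_mult[of 0]) auto
  moreover have "sqle (X \<times> Y \<times> X \<times> Y) (\<lambda>(x, y, x', y'). max (dY (f x) y) (max (dX x x') (dY y y')))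
      (\<lambda>(x, y, x', y'). dY (f x') y')" (is "sqle ?D ?\<alpha> _")
  proof -
    have "sqle ?D ?\<alpha> (\<lambda>(x, y, x', y'). dY (f x') (f x))"
      by (rule sqle_pullback[OF unif_cont, where g = "\<lambda>(x, y, x', y'). (x, x')"])
        (auto simp: Y.commute)
    moreover have "sqle ?D ?\<alpha> (\<lambda>(x, y, x', y'). dY (f x) y + dY y y')"
      by (rule sqle_of_le_mult[of 2]) auto
    ultimately have "sqle ?D ?\<alpha> (\<lambda>w. (\<lambda>(x, y, x', y'). dY (f x') (f x)) w + (\<lambda>(x, y, x', y'). dY (f x) y + dY y y') w)"
      by (rule sqle_add)
    then show ?thesis
    proof (rule sqle_mono, clarsimp)
      fix x y x' y' assume "x \<in> X" "y \<in> Y" "x' \<in> X" "y' \<in> Y"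
      then show "dY (f x') y' \<le> dY (f x') (f x) + (dY (f x) y + dY y y')"
        using f Y.triangle[of "f x'" "f x" y'] Y.triangle[of "f x" y y'] by fastforce
    qed
  qed
  moreover have "sqle (X \<times> Y \<times> Y) (\<lambda>(x, y, y'). max (dY (f x) y) (dY (f x) y')) (\<lambda>(x, y, y'). dY y y')"
  proof (rule sqle_of_le_mult[of 2], simp, clarsimp)
    fix x y y' assume "x \<in> X" "y \<in> Y" "y' \<in> Y"
    then show "dY y y' \<le> 2 * max (dY (f x) y) (dY (f x) y')"
      using f Y.triangle''[of y "f x" y'] by fastforce
  qed
  moreover have "sqle X (\<lambda>x. dX x x) (\<lambda>x. inf01 Y (\<lambda>y. dY (f x) y))"
  proof (rule sqle_of_le_mult[of 0])
    fix x assume "x \<in> X"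
    then show "inf01 Y (\<lambda>y. dY (f x) y) \<le> 0 * dX x x"
      using inf01_le[of "f x" Y "\<lambda>y. dY (f x) y"] f by auto
  qed simp
  ultimately show ?thesis
    using f le_1 unfolding funrel_def Gmor_def by auto
qed

lemma funrel_pair:
  assumes "funrel Z T X R F" and "funrel Z T Y S H"
  shows "funrel Z T (X \<times> Y) (maxdist R S) (\<lambda>z p. max (F z (fst p)) (H z (snd p)))"
proof -
  have F_range: "\<forall>z\<in>Z. \<forall>x\<in>X. 0 \<le> F z x \<and> F z x \<le> 1"
    and F_strict: "sqle (Z \<times> X) (\<lambda>(z, x). F z x) (\<lambda>(z, x). max (T z z) (R x x))"
    and F_ext: "sqle (Z \<times> X \<times> Z \<times> X) (\<lambda>(z, x, z', x'). max (F z x) (max (T z z') (R x x')))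
                  (\<lambda>(z, x, z', x'). F z' x')"
    and F_sv: "sqle (Z \<times> X \<times> X) (\<lambda>(z, x, x'). max (F z x) (F z x')) (\<lambda>(z, x, x'). R x x')"
    and F_total: "sqle Z (\<lambda>z. T z z) (\<lambda>z. inf01 X (\<lambda>x. F z x))"
    using assms(1) unfolding funrel_def by blast+
  have H_range: "\<forall>z\<in>Z. \<forall>y\<in>Y. 0 \<le> H z y \<and> H z y \<le> 1"
    and H_strict: "sqle (Z \<times> Y) (\<lambda>(z, y). H z y) (\<lambda>(z, y). max (T z z) (S y y))"
    and H_ext: "sqle (Z \<times> Y \<times> Z \<times> Y) (\<lambda>(z, y, z', y'). max (H z y) (max (T z z') (S y y')))
                  (\<lambda>(z, y, z', y'). H z' y')"
    and H_sv: "sqle (Z \<times> Y \<times> Y) (\<lambda>(z, y, y'). max (H z y) (H z y')) (\<lambda>(z, y, y'). S y y')"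
    and H_total: "sqle Z (\<lambda>z. T z z) (\<lambda>z. inf01 Y (\<lambda>y. H z y))"
    using assms(2) unfolding funrel_def by blast+
  let ?K = "\<lambda>z p. max (F z (fst p)) (H z (snd p))"
  have "sqle (Z \<times> (X \<times> Y)) (\<lambda>(z, p). ?K z p) (\<lambda>(z, p). max (T z z) (maxdist R S p p))"
  proof -
    have "sqle (Z \<times> (X \<times> Y)) (\<lambda>(z, p). ?K z p) (\<lambda>(z, p). max (T z z) (R (fst p) (fst p)))"
      by (rule sqle_pullback[OF F_strict, where g = "\<lambda>(z, p). (z, fst p)"]) auto
    moreover have "sqle (Z \<times> (X \<times> Y)) (\<lambda>(z, p). ?K z p) (\<lambda>(z, p). max (T z z) (S (snd p) (snd p)))"
      by (rule sqle_pullback[OF H_strict, where g = "\<lambda>(z, p). (z, snd p)"]) auto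
    ultimately show ?thesis
      by (rule sqle_mono[OF sqle_max]) (auto simp: maxdist_def max_def)
  qed
  moreover have "sqle (Z \<times> (X \<times> Y) \<times> Z \<times> (X \<times> Y))
      (\<lambda>(z, p, z', p'). max (?K z p) (max (T z z') (maxdist R S p p'))) (\<lambda>(z, p, z', p'). ?K z' p')"
  proof -
    have "sqle (Z \<times> (X \<times> Y) \<times> Z \<times> (X \<times> Y))
        (\<lambda>(z, p, z', p'). max (?K z p) (max (T z z') (maxdist R S p p'))) (\<lambda>(z, p, z', p'). F z' (fst p'))"
      by (rule sqle_pullback[OF F_ext, where g = "\<lambda>(z, p, z', p'). (z, fst p, z', fst p')"])
        (auto simp: maxdist_def max_def)
    moreover have "sqle (Z \<times> (X \<times> Y) \<times> Z \<times> (X \<times> Y))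
        (\<lambda>(z, p, z', p'). max (?K z p) (max (T z z') (maxdist R S p p'))) (\<lambda>(z, p, z', p'). H z' (snd p'))"
      by (rule sqle_pullback[OF H_ext, where g = "\<lambda>(z, p, z', p'). (z, snd p, z', snd p')"])
        (auto simp: maxdist_def max_def)
    ultimately show ?thesis
      by (rule sqle_mono[OF sqle_max]) auto
  qed
  moreover have "sqle (Z \<times> (X \<times> Y) \<times> (X \<times> Y))
      (\<lambda>(z, p, p'). max (?K z p) (?K z p')) (\<lambda>(z, p, p'). maxdist R S p p')"
  proof -
    have "sqle (Z \<times> (X \<times> Y) \<times> (X \<times> Y))
        (\<lambda>(z, p, p'). max (?K z p) (?K z p')) (\<lambda>(z, p, p'). R (fst p) (fst p'))"
      by (rule sqle_pullback[OF F_sv, where g = "\<lambda>(z, p, p'). (z, fst p, fst p')"]) (auto simp: max_def)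
    moreover have "sqle (Z \<times> (X \<times> Y) \<times> (X \<times> Y))
        (\<lambda>(z, p, p'). max (?K z p) (?K z p')) (\<lambda>(z, p, p'). S (snd p) (snd p'))"
      by (rule sqle_pullback[OF H_sv, where g = "\<lambda>(z, p, p'). (z, snd p, snd p')"]) (auto simp: max_def)
    ultimately show ?thesis
      by (rule sqle_mono[OF sqle_max]) (auto simp: maxdist_def)
  qed
  moreover have "sqle Z (\<lambda>z. T z z) (\<lambda>z. inf01 (X \<times> Y) (?K z))"
    using F_range H_range
    by (intro sqle_mono[OF sqle_max[OF F_total H_total]]) (simp add: inf01_Times_max_le)
  ultimately show ?thesis
    using F_range H_range unfolding funrel_def by (auto simp: le_max_iff_disj)
qed

lemma funrel_respects_right:
  assumes "funrel Z T X R F"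
  shows "sqle (Z \<times> X \<times> X) (\<lambda>(z, x, x'). max (F z x) (R x x')) (\<lambda>(z, x, x'). F z x')"
    (is "sqle ?D ?\<alpha> _")
proof -
  have F_strict: "sqle (Z \<times> X) (\<lambda>(z, x). F z x) (\<lambda>(z, x). max (T z z) (R x x))"
    and F_ext: "sqle (Z \<times> X \<times> Z \<times> X) (\<lambda>(z, x, z', x'). max (F z x) (max (T z z') (R x x')))
                  (\<lambda>(z, x, z', x'). F z' x')"
    using assms unfolding funrel_def by blast+
  have "sqle ?D ?\<alpha> (\<lambda>(z, x, x'). T z z)"
    by (rule sqle_pullback[OF F_strict, where g = "\<lambda>(z, x, x'). (z, x)"]) auto
  moreover have "sqle ?D ?\<alpha> ?\<alpha>"
    by (rule sqle_of_le_mult[of 1]) auto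
  ultimately have "sqle ?D ?\<alpha> (\<lambda>(z, x, x'). max (F z x) (max (T z z) (R x x')))"
    by (rule sqle_mono[OF sqle_max]) (auto simp: max.left_commute)
  then show ?thesis
    by (rule sqle_trans[OF _ sqle_pullback[OF F_ext, where g = "\<lambda>(z, x, x'). (z, x, z, x')"]]) auto
qed

lemma mor_eq_rcomp_Gmor:
  assumes F: "funrel Z T X R F" and \<pi>: "\<pi> \<in> P \<rightarrow> X"
    and R_nonneg: "\<And>x x'. x \<in> X \<Longrightarrow> x' \<in> X \<Longrightarrow> 0 \<le> R x x'"
    and K_ge: "\<And>z p. z \<in> Z \<Longrightarrow> p \<in> P \<Longrightarrow> F z (\<pi> p) \<le> K z p"
  shows "mor_eq Z X (rcomp P K (Gmor R \<pi>)) F"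
  unfolding mor_eq_def sqle_def
proof (intro allI impI)
  fix \<epsilon> :: real assume "0 < \<epsilon>"
  then obtain \<delta> where "\<delta> > 0" and \<delta>: "\<forall>w \<in> Z \<times> X \<times> X.
      (\<lambda>(z, x, x'). max (F z x) (R x x')) w \<le> \<delta> \<longrightarrow> (\<lambda>(z, x, x'). F z x') w \<le> \<epsilon>"
    using funrel_respects_right[OF F] unfolding sqle_def by blast
  define \<eta> where "\<eta> = min \<delta> 1 / 2"
  have "0 < \<eta>" "\<eta> < 2 * \<eta>" "2 * \<eta> \<le> \<delta>" "2 * \<eta> \<le> 1"
    using \<open>\<delta> > 0\<close> by (auto simp: \<eta>_def)
  show "\<exists>\<eta>>0. \<forall>w \<in> Z \<times> X.
    (case w of (z, x) \<Rightarrow> rcomp P K (Gmor R \<pi>) z x) \<le> \<eta> \<longrightarrow> (case w of (z, x) \<Rightarrow> F z x) \<le> \<epsilon>"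
  proof (intro exI[of _ \<eta>] conjI \<open>0 < \<eta>\<close> ballI, clarsimp)
    fix z x assume "z \<in> Z" "x \<in> X" and small: "rcomp P K (Gmor R \<pi>) z x \<le> \<eta>"
    have "inf01 P (\<lambda>p. max (K z p) (R (\<pi> p) x)) < 2 * \<eta>"
      using small \<open>\<eta> < 2 * \<eta>\<close> by (simp add: rcomp_def Gmor_def)
    moreover have "0 \<le> max (K z p) (R (\<pi> p) x)" if "p \<in> P" for p
      using R_nonneg[OF funcset_mem[OF \<pi> that] \<open>x \<in> X\<close>] by (simp add: le_max_iff_disj)
    ultimately obtain p where "p \<in> P" and "max (K z p) (R (\<pi> p) x) < 2 * \<eta>"
      using inf01_lessD \<open>2 * \<eta> \<le> 1\<close> by blast
    then have "max (F z (\<pi> p)) (R (\<pi> p) x) \<le> \<delta>"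
      using K_ge[OF \<open>z \<in> Z\<close> \<open>p \<in> P\<close>] \<open>2 * \<eta> \<le> \<delta>\<close> by auto
    then show "F z x \<le> \<epsilon>"
      using \<delta>[rule_format, of "(z, \<pi> p, x)"] \<open>z \<in> Z\<close> \<open>x \<in> X\<close> funcset_mem[OF \<pi> \<open>p \<in> P\<close>] by simp
  qed
qed

lemma sqle_of_mor_eq_rcomp_Gmor:
  assumes "mor_eq Z X (rcomp P K (Gmor R \<pi>)) F" and \<pi>: "\<pi> \<in> P \<rightarrow> X"
    and R_nonneg: "\<And>x x'. x \<in> X \<Longrightarrow> x' \<in> X \<Longrightarrow> 0 \<le> R x x'"
    and R_refl: "\<And>x. x \<in> X \<Longrightarrow> R x x = 0"
    and K_nonneg: "\<And>z p. z \<in> Z \<Longrightarrow> p \<in> P \<Longrightarrow> 0 \<le> K z p"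
  shows "sqle (Z \<times> P) (\<lambda>(z, p). K z p) (\<lambda>(z, p). F z (\<pi> p))"
proof (rule sqle_pullback[OF assms(1)[unfolded mor_eq_def], where g = "\<lambda>(z, p). (z, \<pi> p)"], clarsimp)
  fix z p assume "z \<in> Z" "p \<in> P"
  have "\<pi> p \<in> X" using \<pi> \<open>p \<in> P\<close> by (rule funcset_mem)
  have "rcomp P K (Gmor R \<pi>) z (\<pi> p) \<le> max (K z p) (R (\<pi> p) (\<pi> p))"
    unfolding rcomp_def Gmor_def
    by (rule inf01_le) (use \<open>p \<in> P\<close> \<pi> R_nonneg in \<open>auto simp: le_max_iff_disj\<close>)
  then show "\<pi> p \<in> X \<and> rcomp P K (Gmor R \<pi>) z (\<pi> p) \<le> K z p"
    using \<open>\<pi> p \<in> X\<close> R_refl K_nonneg[OF \<open>z \<in> Z\<close> \<open>p \<in> P\<close>] by simp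
qed

lemma funrel_to_unit:
  assumes "per_obj Z T"
  shows "funrel Z T {()} (\<lambda>_ _. 0) (\<lambda>z _. T z z)"
proof -
  have T_range: "\<forall>x\<in>Z. \<forall>y\<in>Z. 0 \<le> T x y \<and> T x y \<le> 1"
    and T_sym: "sqle (Z \<times> Z) (\<lambda>(x, y). T x y) (\<lambda>(x, y). T y x)"
    and T_trans: "sqle (Z \<times> Z \<times> Z) (\<lambda>(x, y, z). max (T x y) (T y z)) (\<lambda>(x, y, z). T x z)"
    using assms unfolding per_obj_def by blast+
  have "sqle (Z \<times> {()}) (\<lambda>(z, u). T z z) (\<lambda>(z, u). max (T z z) 0)"
    by (rule sqle_of_le_mult[of 1]) (use T_range in auto)
  moreover have "sqle (Z \<times> {()} \<times> Z \<times> {()}) (\<lambda>(z, u, z', u'). max (T z z) (max (T z z') 0))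
      (\<lambda>(z, u, z', u'). T z' z')" (is "sqle ?D ?\<alpha> _")
  proof -
    have "sqle ?D ?\<alpha> (\<lambda>(z, u, z', u'). T z' z)"
      by (rule sqle_pullback[OF T_sym, where g = "\<lambda>(z, u, z', u'). (z, z')"]) auto
    moreover have "sqle ?D ?\<alpha> (\<lambda>(z, u, z', u'). T z z')"
      by (rule sqle_of_le_mult[of 1]) auto
    ultimately show ?thesis
      by (rule sqle_trans[OF sqle_max sqle_pullback[OF T_trans, where g = "\<lambda>(z, u, z', u'). (z', z, z')"]])
        auto
  qed
  moreover have "sqle (Z \<times> {()} \<times> {()}) (\<lambda>(z, u, u'). max (T z z) (T z z)) (\<lambda>(z, u, u'). 0)"
    by (rule sqle_of_le_mult[of 0]) auto
  moreover have "sqle Z (\<lambda>z. T z z) (\<lambda>z. inf01 {()} (\<lambda>u. T z z))"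
    by (rule sqle_of_le_mult[of 1]) (simp_all add: inf01_def)
  ultimately show ?thesis
    using T_range unfolding funrel_def by simp
qed

lemma term_univ_at_unit: "term_univ_at Z T {()} (\<lambda>_ _. 0)"
  unfolding term_univ_at_def
proof
  assume "per_obj Z T"
  have "mor_eq Z {()} K (\<lambda>z _. T z z)" if "funrel Z T {()} (\<lambda>_ _. 0) K" for K
  proof -
    have "sqle (Z \<times> {()}) (\<lambda>(z, u). K z u) (\<lambda>(z, u). max (T z z) 0)"
      using that unfolding funrel_def by simp
    then show ?thesis
      unfolding mor_eq_def by (rule sqle_mono) auto
  qed
  with funrel_to_unit[OF \<open>per_obj Z T\<close>]
  show "\<exists>K. funrel Z T {()} (\<lambda>_ _. 0) K \<and> (\<forall>K'. funrel Z T {()} (\<lambda>_ _. 0) K' \<longrightarrow> mor_eq Z {()} K' K)"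
    by blast
qed

lemma prod_univ_at_maxdist:
  assumes "Metric_space X d1" and "Metric_space Y d2"
  shows "prod_univ_at Z T (X \<times> Y) (maxdist d1 d2) X d1 Y d2 (Gmor d1 fst) (Gmor d2 snd)"
  unfolding prod_univ_at_def
proof (intro impI allI)
  interpret X: Metric_space X d1 by fact
  interpret Y: Metric_space Y d2 by fact
  fix F H assume "funrel Z T X d1 F \<and> funrel Z T Y d2 H"
  then have F: "funrel Z T X d1 F" and H: "funrel Z T Y d2 H" by simp_all
  let ?K = "\<lambda>z p. max (F z (fst p)) (H z (snd p))"
  have "mor_eq Z X (rcomp (X \<times> Y) ?K (Gmor d1 fst)) F"
    by (rule mor_eq_rcomp_Gmor[OF F]) auto
  moreover have "mor_eq Z Y (rcomp (X \<times> Y) ?K (Gmor d2 snd)) H"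
    by (rule mor_eq_rcomp_Gmor[OF H]) auto
  moreover have "mor_eq Z (X \<times> Y) K ?K"
    if "funrel Z T (X \<times> Y) (maxdist d1 d2) K" and K_F: "mor_eq Z X (rcomp (X \<times> Y) K (Gmor d1 fst)) F"
      and K_H: "mor_eq Z Y (rcomp (X \<times> Y) K (Gmor d2 snd)) H" for K
  proof -
    have K_nonneg: "0 \<le> K z p" if "z \<in> Z" "p \<in> X \<times> Y" for z p
      using \<open>funrel Z T (X \<times> Y) (maxdist d1 d2) K\<close> that unfolding funrel_def by blast
    have "sqle (Z \<times> (X \<times> Y)) (\<lambda>(z, p). K z p) (\<lambda>(z, p). F z (fst p))"
      by (rule sqle_of_mor_eq_rcomp_Gmor[OF K_F]) (auto intro: K_nonneg)
    moreover have "sqle (Z \<times> (X \<times> Y)) (\<lambda>(z, p). K z p) (\<lambda>(z, p). H z (snd p))"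
      by (rule sqle_of_mor_eq_rcomp_Gmor[OF K_H]) (auto intro: K_nonneg)
    ultimately show ?thesis
      unfolding mor_eq_def by (rule sqle_mono[OF sqle_max]) auto
  qed
  ultimately show "\<exists>K. funrel Z T (X \<times> Y) (maxdist d1 d2) K \<and>
      mor_eq Z X (rcomp (X \<times> Y) K (Gmor d1 fst)) F \<and> mor_eq Z Y (rcomp (X \<times> Y) K (Gmor d2 snd)) H \<and>
      (\<forall>K'. funrel Z T (X \<times> Y) (maxdist d1 d2) K' \<and> mor_eq Z X (rcomp (X \<times> Y) K' (Gmor d1 fst)) F \<and>
            mor_eq Z Y (rcomp (X \<times> Y) K' (Gmor d2 snd)) H \<longrightarrow> mor_eq Z (X \<times> Y) K' K)"
    using funrel_pair[OF F H] by blast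
qed

theorem mainTheorem17:
  fixes X :: "'a set" and d1 :: "'a \<Rightarrow> 'a \<Rightarrow> real"
    and Y :: "'b set" and d2 :: "'b \<Rightarrow> 'b \<Rightarrow> real"
    and Z :: "'z set" and T :: "'z \<Rightarrow> 'z \<Rightarrow> real"
  assumes "cMet1 X d1" and "cMet1 Y d2"
  shows "per_obj (X \<times> Y) (maxdist d1 d2)
       \<and> funrel (X \<times> Y) (maxdist d1 d2) X d1 (Gmor d1 fst)
       \<and> funrel (X \<times> Y) (maxdist d1 d2) Y d2 (Gmor d2 snd)
       \<and> prod_univ_at Z T (X \<times> Y) (maxdist d1 d2) X d1 Y d2 (Gmor d1 fst) (Gmor d2 snd)
       \<and> per_obj {()} (\<lambda>_ _. 0)
       \<and> term_univ_at Z T {()} (\<lambda>_ _. 0)"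
proof -
  have X: "Metric_space X d1" and Y: "Metric_space Y d2"
    using assms by (simp_all add: cMet1_def)
  have X_le_1: "d1 x x' \<le> 1" if "x \<in> X" "x' \<in> X" for x x'
    using assms(1) that by (simp add: cMet1_def)
  have Y_le_1: "d2 y y' \<le> 1" if "y \<in> Y" "y' \<in> Y" for y y'
    using assms(2) that by (simp add: cMet1_def)
  have unit: "Metric_space {()} (\<lambda>_ _. 0 :: real)"
    by unfold_locales auto
  have "per_obj (X \<times> Y) (maxdist d1 d2)"
    using X_le_1 Y_le_1 by (intro per_obj_Metric_space Metric_space_maxdist X Y) (auto simp: maxdist_def)
  moreover have "funrel (X \<times> Y) (maxdist d1 d2) X d1 (Gmor d1 fst)"
    using X_le_1 by (intro funrel_Gmor Metric_space_maxdist X Y sqle_of_le_mult[of 1]) (auto simp: maxdist_def)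
  moreover have "funrel (X \<times> Y) (maxdist d1 d2) Y d2 (Gmor d2 snd)"
    using Y_le_1 by (intro funrel_Gmor Metric_space_maxdist X Y sqle_of_le_mult[of 1]) (auto simp: maxdist_def)
  ultimately show ?thesis
    using prod_univ_at_maxdist[OF X Y] per_obj_Metric_space[OF unit] term_univ_at_unit by auto
qed

end
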